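(* Let $\delta_j,\delta_k$ be coprime integers with $1<\delta_j<\delta_k$, let $r=\delta_k\bmod\delta_j$ and let $f\colon \mathcal B(\delta_j,r)\to\mathcal B(\delta_k,\delta_j)$, $f(x',y')=(y',\,x'-y'\lfloor \delta_k/\delta_j\rfloor)$. Then the irreducible elements of $\mathcal B(\delta_k,\delta_j)\setminus f(\mathcal B(\delta_j,r))$ are exactly the B\'ezout couples $(1,y)$ with $-\lfloor\delta_k/\delta_j\rfloor<y\le 0$.
   Context: For coprime positive integers $p,q$ and $i\in\{1,\ldots,\max\{p,q\}\}$, the $\lambda$-B\'ezout couple $\boldsymbol\lambda_i$ of $i$ for $(p,q)$ is the unique $(x,y)\in\mathbb Z^2$ with $xp+yq=i$ and $0<y\le p$, and the $\mu$-B\'ezout couple $\boldsymbol\mu_i$ of $i$ for $(p,q)$ is the unique $(x,y)\in\mathbb Z^2$ with $xp+yq=i$ and $0<x\le q$. $\mathcal B(p,q)$ denotes the set of all $\lambda$- and $\mu$-B\'ezout couples for $(p,q)$. $\boldsymbol\lambda_i$ is irreducible if there are no $j,k\in\{1,\ldots,\max\{p,q\}\}$ with $\boldsymbol\lambda_i=\boldsymbol\lambda_j+\boldsymbol\lambda_k$; likewise $\boldsymbol\mu_i$ is irreducible if there are no such $j,k$ with $\boldsymbol\mu_i=\boldsymbol\mu_j+\boldsymbol\mu_k$. *)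

theory Defs
  imports Main
begin

definition lambda_couple :: "int \<Rightarrow> int \<Rightarrow> int \<Rightarrow> int \<times> int" where
  "lambda_couple p q i = (THE c. fst c * p + snd c * q = i \<and> 0 < snd c \<and> snd c \<le> p)"

definition mu_couple :: "int \<Rightarrow> int \<Rightarrow> int \<Rightarrow> int \<times> int" where
  "mu_couple p q i = (THE c. fst c * p + snd c * q = i \<and> 0 < fst c \<and> fst c \<le> q)"

definition bezout_set :: "int \<Rightarrow> int \<Rightarrow> (int \<times> int) set" where
  "bezout_set p q = lambda_couple p q ` {1..max p q} \<union> mu_couple p q ` {1..max p q}"

definition pair_add :: "int \<times> int \<Rightarrow> int \<times> int \<Rightarrow> int \<times> int" where
  "pair_add a b = (fst a + fst b, snd a + snd b)"

definition lambda_irreducible :: "int \<Rightarrow> int \<Rightarrow> int \<Rightarrow> bool" where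
  "lambda_irreducible p q i \<longleftrightarrow>
     \<not> (\<exists>j\<in>{1..max p q}. \<exists>k\<in>{1..max p q}.
          lambda_couple p q i = pair_add (lambda_couple p q j) (lambda_couple p q k))"

definition mu_irreducible :: "int \<Rightarrow> int \<Rightarrow> int \<Rightarrow> bool" where
  "mu_irreducible p q i \<longleftrightarrow>
     \<not> (\<exists>j\<in>{1..max p q}. \<exists>k\<in>{1..max p q}.
          mu_couple p q i = pair_add (mu_couple p q j) (mu_couple p q k))"

text \<open>An element of B(p,q) is irreducible if it is an irreducible lambda-couple or an
  irreducible mu-couple (for 1 < min p q no couple is both).\<close>
definition bezout_irreducible :: "int \<Rightarrow> int \<Rightarrow> int \<times> int \<Rightarrow> bool" where
  "bezout_irreducible p q c \<longleftrightarrow>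
     (\<exists>i\<in>{1..max p q}. c = lambda_couple p q i \<and> lambda_irreducible p q i) \<or>
     (\<exists>i\<in>{1..max p q}. c = mu_couple p q i \<and> mu_irreducible p q i)"

end

theory Submission
  imports Defs
begin

text \<open>Write \<open>p = \<delta>\<^sub>k = m q + r\<close> and \<open>q = \<delta>\<^sub>j\<close>, and call \<open>x p + y q\<close> the index of a couple
  \<open>(x, y)\<close>. Couples of \<open>\<B>(p, q)\<close> have index in \<open>[1, p]\<close>, and the map \<open>f = euclid_step m\<close>
  preserves indices because \<open>(y + x m) q + x r = x p + y q\<close>; hence \<open>f(\<B>(q, r))\<close> consists exactly
  of the couples of index at most \<open>q\<close>. For an index \<open>i\<close> with \<open>q < i \<le> p\<close>, every \<open>\<lambda>\<close>-couple
  splits as \<open>\<lambda>\<^sub>i = \<lambda>\<^sub>i\<^sub>-\<^sub>q + \<lambda>\<^sub>q\<close>, and a \<open>\<mu>\<close>-couple \<open>(x, y)\<close> with \<open>x \<ge> 2\<close> splits off the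
  \<open>\<mu>\<close>-couple \<open>(1, y\<^sub>0)\<close> whose index lies in \<open>[i - q, i - 1]\<close>; a \<open>\<mu>\<close>-couple \<open>(1, y)\<close> cannot
  split since all \<open>\<mu>\<close>-couples have positive first entry. The remaining couples \<open>(1, y)\<close> with
  \<open>q < p + y q \<le> p\<close> are exactly those with \<open>-m < y \<le> 0\<close>.\<close>

lemma bezout_coeffs_unique:
  fixes p q :: int
  assumes "coprime p q" "0 < p" "x * p + y * q = x' * p + y' * q"
    and "0 < y" "y \<le> p" "0 < y'" "y' \<le> p"
  shows "x = x' \<and> y = y'"
proof -
  have "(y - y') * q = (x' - x) * p"
    using assms(3) by (simp add: algebra_simps)
  then have "p dvd (y - y') * q"
    by simp
  then have "p dvd y - y'"
    using assms(1) by (simp add: coprime_dvd_mult_left_iff)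
  moreover have "\<bar>y - y'\<bar> < p"
    using assms(4-7) by auto
  ultimately have "y = y'"
    using dvd_imp_le_int[of "y - y'" p] by fastforce
  with assms(2,3) show ?thesis
    by simp
qed

lemma bezout_coeffs_exist:
  fixes p q i :: int
  assumes "coprime p q" "0 < p"
  obtains x y where "x * p + y * q = i" "0 < y" "y \<le> p"
proof -
  obtain u v where uv: "u * p + v * q = 1"
    using bezout_int[of p q] assms(1) by auto
  define t where "t = (i * v - 1) div p"
  define y where "y = (i * v - 1) mod p + 1"
  have y_eq: "y = i * v - p * t"
    unfolding y_def t_def using minus_div_mult_eq_mod[of "i * v - 1" p] by (simp add: algebra_simps)
  have "i = i * (u * p + v * q)"
    using uv by simp
  then have "(i * u + t * q) * p + y * q = i"
    unfolding y_eq by (simp add: algebra_simps)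
  moreover have "0 < y" "y \<le> p"
    unfolding y_def using assms(2) pos_mod_bound[of p "i * v - 1"] pos_mod_sign[of p "i * v - 1"]
    by linarith+
  ultimately show thesis
    using that by blast
qed

lemma lambda_couple_eqI:
  fixes p q :: int
  assumes "coprime p q" "0 < p" "x * p + y * q = i" "0 < y" "y \<le> p"
  shows "lambda_couple p q i = (x, y)"
  unfolding lambda_couple_def
proof (rule the_equality)
  fix c :: "int \<times> int"
  assume "fst c * p + snd c * q = i \<and> 0 < snd c \<and> snd c \<le> p"
  with assms show "c = (x, y)"
    using bezout_coeffs_unique[OF assms(1,2), of "fst c" "snd c" x y] by (simp add: prod_eq_iff)
qed (use assms in simp)

lemma mu_couple_eqI:
  fixes p q :: int
  assumes "coprime p q" "0 < q" "x * p + y * q = i" "0 < x" "x \<le> q"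
  shows "mu_couple p q i = (x, y)"
  unfolding mu_couple_def
proof (rule the_equality)
  fix c :: "int \<times> int"
  assume "fst c * p + snd c * q = i \<and> 0 < fst c \<and> fst c \<le> q"
  with assms show "c = (x, y)"
    using bezout_coeffs_unique[of q p "snd c" "fst c" y x] by (simp add: prod_eq_iff coprime_commute add.commute)
qed (use assms in simp)

lemma lambda_coupleE:
  fixes p q :: int
  assumes "coprime p q" "0 < p"
  obtains x y where "lambda_couple p q i = (x, y)" "x * p + y * q = i" "0 < y" "y \<le> p"
proof -
  obtain x y where "x * p + y * q = i" "0 < y" "y \<le> p"
    by (rule bezout_coeffs_exist[OF assms])
  with lambda_couple_eqI[OF assms this] show thesis
    using that by blast
qed

lemma mu_coupleE:
  fixes p q :: int
  assumes "coprime p q" "0 < q"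
  obtains x y where "mu_couple p q i = (x, y)" "x * p + y * q = i" "0 < x" "x \<le> q"
proof -
  have "coprime q p"
    using assms(1) by (simp add: coprime_commute)
  then obtain y x where "y * q + x * p = i" "0 < x" "x \<le> q"
    by (rule bezout_coeffs_exist[OF _ assms(2)])
  then have "x * p + y * q = i"
    by simp
  with mu_couple_eqI[OF assms this] show thesis
    using that \<open>0 < x\<close> \<open>x \<le> q\<close> by blast
qed

lemma mem_bezout_set_iff:
  fixes p q :: int
  assumes "coprime p q" "0 < p" "0 < q"
  shows "(x, y) \<in> bezout_set p q \<longleftrightarrow>
    1 \<le> x * p + y * q \<and> x * p + y * q \<le> max p q \<and> (0 < y \<and> y \<le> p \<or> 0 < x \<and> x \<le> q)"
    (is "_ \<longleftrightarrow> ?rhs")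
proof
  assume "(x, y) \<in> bezout_set p q"
  then obtain i where i: "i \<in> {1..max p q}" and "(x, y) = lambda_couple p q i \<or> (x, y) = mu_couple p q i"
    unfolding bezout_set_def by blast
  then show ?rhs
  proof (elim disjE)
    assume "(x, y) = lambda_couple p q i"
    moreover obtain x' y' where "lambda_couple p q i = (x', y')" "x' * p + y' * q = i" "0 < y'" "y' \<le> p"
      by (rule lambda_coupleE[OF assms(1,2)])
    ultimately show ?rhs
      using i by simp
  next
    assume "(x, y) = mu_couple p q i"
    moreover obtain x' y' where "mu_couple p q i = (x', y')" "x' * p + y' * q = i" "0 < x'" "x' \<le> q"
      by (rule mu_coupleE[OF assms(1,3)])
    ultimately show ?rhs
      using i by simp
  qed
next
  define i where "i = x * p + y * q"
  assume ?rhs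
  then have "i \<in> {1..max p q}" and "(x, y) = lambda_couple p q i \<or> (x, y) = mu_couple p q i"
    using lambda_couple_eqI[OF assms(1,2), of x y i] mu_couple_eqI[OF assms(1,3), of x y i]
    unfolding i_def by auto
  then show "(x, y) \<in> bezout_set p q"
    unfolding bezout_set_def by blast
qed

lemma coprime_imp_mod_pos:
  fixes p q :: int
  assumes "coprime p q" "1 < q"
  shows "0 < p mod q"
proof -
  have "\<not> q dvd p"
  proof
    assume "q dvd p"
    then have "is_unit q"
      using coprime_common_divisor[OF assms(1)] by simp
    with assms(2) show False
      by simp
  qed
  then have "p mod q \<noteq> 0"
    by (simp add: mod_eq_0_iff_dvd)
  with assms(2) show ?thesis
    using pos_mod_sign[of q p] by linarith
qed

definition euclid_step :: "int \<Rightarrow> int \<times> int \<Rightarrow> int \<times> int" where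
  "euclid_step m = (\<lambda>(x', y'). (y', x' - y' * m))"

lemma mem_euclid_step_image_iff: "(x, y) \<in> euclid_step m ` A \<longleftrightarrow> (y + x * m, x) \<in> A"
proof
  assume "(x, y) \<in> euclid_step m ` A"
  then show "(y + x * m, x) \<in> A"
    by (auto simp: euclid_step_def)
next
  assume "(y + x * m, x) \<in> A"
  moreover have "(x, y) = euclid_step m (y + x * m, x)"
    by (simp add: euclid_step_def)
  ultimately show "(x, y) \<in> euclid_step m ` A"
    by blast
qed

lemma euclid_step_image_iff_index_le:
  fixes p q x y :: int
  assumes "coprime p q" "1 < q" "q < p" and xy: "(x, y) \<in> bezout_set p q"
  shows "(x, y) \<in> euclid_step (p div q) ` bezout_set q (p mod q) \<longleftrightarrow> x * p + y * q \<le> q"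
proof -
  define m where "m = p div q"
  define r where "r = p mod q"
  have r: "0 < r" "r < q"
    unfolding r_def using coprime_imp_mod_pos[OF assms(1,2)] assms(2) by simp_all
  have "coprime q r"
    unfolding r_def using assms(1,2) by (simp add: coprime_commute)
  then have Bqr: "(a, b) \<in> bezout_set q r \<longleftrightarrow>
      1 \<le> a * q + b * r \<and> a * q + b * r \<le> q \<and> (0 < b \<and> b \<le> q \<or> 0 < a \<and> a \<le> r)" for a b
    using mem_bezout_set_iff[of q r a b] r by simp
  have "p = m * q + r"
    unfolding m_def r_def by simp
  then have index: "(y + x * m) * q + x * r = x * p + y * q"
    by (simp add: algebra_simps)
  have i: "1 \<le> x * p + y * q" "x * p + y * q \<le> p" and xy_bounds: "0 < y \<and> y \<le> p \<or> 0 < x \<and> x \<le> q"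
    using xy mem_bezout_set_iff[OF assms(1)] assms(2,3) by auto
  have "0 < x \<and> x \<le> q \<or> 0 < y + x * m \<and> y + x * m \<le> r" if iq: "x * p + y * q \<le> q"
  proof (cases "0 < x")
    case True
    have "x \<le> q"
    proof (rule ccontr)
      assume "\<not> x \<le> q"
      then have "p \<le> x * p" "q \<le> y * q"
        using xy_bounds True assms(2,3) by auto
      then show False
        using iq assms(2,3) by linarith
    qed
    with True show ?thesis
      by simp
  next
    case False
    then have y: "0 < y" "y \<le> p"
      using xy_bounds by auto
    have "-q < x"
    proof (rule ccontr)
      assume "\<not> -q < x"
      then have "x * p \<le> -q * p" "y * q \<le> p * q"
        using mult_right_mono[of x "-q" p] mult_right_mono[of y p q] y assms(2,3) by simp_all
      then show False
        using i by (simp add: algebra_simps)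
    qed
    have "x * r \<le> 0"
      using False r by (simp add: mult_nonpos_nonneg)
    then have "0 < (y + x * m) * q"
      using index i by linarith
    then have pos: "0 < y + x * m"
      using assms(2) by (simp add: zero_less_mult_iff)
    have "y + x * m \<le> r"
    proof (rule ccontr)
      assume "\<not> y + x * m \<le> r"
      then have "(r + 1) * q \<le> (y + x * m) * q"
        using assms(2) by (intro mult_right_mono) auto
      then have "q * r \<le> (-x) * r"
        using index iq by (simp add: algebra_simps)
      then have "q \<le> -x"
        using r(1) by (simp only: mult_le_cancel_right_pos)
      with \<open>-q < x\<close> show False
        by simp
    qed
    with pos show ?thesis
      by simp
  qed
  then have "(y + x * m, x) \<in> bezout_set q r \<longleftrightarrow> x * p + y * q \<le> q"
    unfolding Bqr index using i by auto
  then show ?thesis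
    unfolding mem_euclid_step_image_iff m_def r_def .
qed

lemma lambda_reducible_above:
  fixes p q i :: int
  assumes "coprime p q" "0 < q" "q < i" "i \<le> p"
  shows "\<not> lambda_irreducible p q i"
proof -
  have "0 < p"
    using assms by simp
  obtain x y where xy: "lambda_couple p q i = (x, y)" "x * p + y * q = i" "0 < y" "y \<le> p"
    using lambda_coupleE[OF assms(1) \<open>0 < p\<close>] by blast
  have "y \<noteq> 1"
  proof
    assume "y = 1"
    with xy(2) have "x * p = i - q"
      by simp
    then have "0 < x * p" "x * p < 1 * p"
      using assms by linarith+
    then have "0 < x" "x < 1"
      using \<open>0 < p\<close> by (simp_all add: zero_less_mult_iff mult_less_cancel_right)
    then show False
      by simp
  qed
  then have "lambda_couple p q (i - q) = (x, y - 1)"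
    by (intro lambda_couple_eqI[OF assms(1) \<open>0 < p\<close>]) (use xy(2-4) in \<open>simp_all add: algebra_simps\<close>)
  moreover have "lambda_couple p q q = (0, 1)"
    by (intro lambda_couple_eqI[OF assms(1) \<open>0 < p\<close>]) (use \<open>0 < p\<close> in simp_all)
  ultimately have "lambda_couple p q i = pair_add (lambda_couple p q (i - q)) (lambda_couple p q q)"
    using xy(1) by (simp add: pair_add_def)
  moreover have "i - q \<in> {1..max p q}" "q \<in> {1..max p q}"
    using assms by auto
  ultimately show ?thesis
    unfolding lambda_irreducible_def by blast
qed

lemma mu_irreducible_if_fst_one:
  fixes p q i :: int
  assumes "coprime p q" "0 < q" "mu_couple p q i = (1, y)"
  shows "mu_irreducible p q i"
  unfolding mu_irreducible_def
proof clarify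
  have pos: "0 < fst (mu_couple p q j)" for j
    by (rule mu_coupleE[OF assms(1,2), of j]) simp
  fix j k
  assume "mu_couple p q i = pair_add (mu_couple p q j) (mu_couple p q k)"
  then have "1 = fst (mu_couple p q j) + fst (mu_couple p q k)"
    using assms(3) by (simp add: pair_add_def)
  with pos[of j] pos[of k] show False
    by linarith
qed

lemma mu_reducible_if_fst_ge_two:
  fixes p q i :: int
  assumes "coprime p q" "0 < q" "q < i" "i \<le> max p q" "mu_couple p q i = (x, y)" "2 \<le> x"
  shows "\<not> mu_irreducible p q i"
proof -
  obtain x' y' where "mu_couple p q i = (x', y')" "x' * p + y' * q = i" "x' \<le> q"
    using mu_coupleE[OF assms(1,2)] by blast
  with assms(5) have i: "x * p + y * q = i" and "x \<le> q"
    by simp_all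
  \<comment> \<open>\<open>j\<close> is the index of the \<open>\<mu>\<close>-couple \<open>(1, y\<^sub>0)\<close>, which lies in \<open>[i - q, i - 1]\<close>\<close>
  define y\<^sub>0 where "y\<^sub>0 = (i - 1 - p) div q"
  define j where "j = p + y\<^sub>0 * q"
  have "j = i - 1 - (i - 1 - p) mod q"
    unfolding j_def y\<^sub>0_def using minus_div_mult_eq_mod[of "i - 1 - p" q] by (simp add: algebra_simps)
  moreover have "0 \<le> (i - 1 - p) mod q" "(i - 1 - p) mod q < q"
    using assms(2) by simp_all
  ultimately have j: "i - q \<le> j" "j \<le> i - 1"
    by linarith+
  have "mu_couple p q j = (1, y\<^sub>0)"
    using mu_couple_eqI[OF assms(1,2), of 1 y\<^sub>0 j] j_def assms(2) by simp
  moreover have "mu_couple p q (i - j) = (x - 1, y - y\<^sub>0)"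
    by (intro mu_couple_eqI[OF assms(1,2)]) (use i j_def assms(6) \<open>x \<le> q\<close> in \<open>simp_all add: algebra_simps\<close>)
  ultimately have "mu_couple p q i = pair_add (mu_couple p q j) (mu_couple p q (i - j))"
    using assms(5) by (simp add: pair_add_def)
  moreover have "j \<in> {1..max p q}" "i - j \<in> {1..max p q}"
    using j assms(2-4) by auto
  ultimately show ?thesis
    unfolding mu_irreducible_def by blast
qed

lemma bezout_irreducible_above_iff:
  fixes p q x y :: int
  assumes "coprime p q" "0 < q" "q < p" "(x, y) \<in> bezout_set p q" "q < x * p + y * q"
  shows "bezout_irreducible p q (x, y) \<longleftrightarrow> x = 1"
proof
  have "0 < p"
    using assms(2,3) by simp
  have index: "x * p + y * q \<in> {1..max p q}"
    using assms(4) mem_bezout_set_iff[OF assms(1) \<open>0 < p\<close> assms(2)] by simp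
  assume "bezout_irreducible p q (x, y)"
  then consider (lambda) i where "(x, y) = lambda_couple p q i" "lambda_irreducible p q i"
    | (mu) i where "(x, y) = mu_couple p q i" "mu_irreducible p q i"
    unfolding bezout_irreducible_def by blast
  then show "x = 1"
  proof cases
    case lambda
    obtain x' y' where "lambda_couple p q i = (x', y')" "x' * p + y' * q = i"
      by (rule lambda_coupleE[OF assms(1) \<open>0 < p\<close>])
    with lambda(1) have "i = x * p + y * q"
      by simp
    with lambda(2) show ?thesis
      using lambda_reducible_above[OF assms(1,2)] index assms(3,5) by simp
  next
    case mu
    obtain x' y' where "mu_couple p q i = (x', y')" "x' * p + y' * q = i" "0 < x'"
      by (rule mu_coupleE[OF assms(1,2)])
    with mu(1) have "i = x * p + y * q" "0 < x"
      by simp_all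
    show ?thesis
    proof (rule ccontr)
      assume "x \<noteq> 1"
      with \<open>0 < x\<close> have "2 \<le> x"
        by simp
      have "\<not> mu_irreducible p q i"
        by (rule mu_reducible_if_fst_ge_two[OF assms(1,2) _ _ mu(1)[symmetric] \<open>2 \<le> x\<close>])
          (use index assms(5) \<open>i = x * p + y * q\<close> in simp_all)
      with mu(2) show False
        by contradiction
    qed
  qed
next
  assume "x = 1"
  then have "mu_couple p q (x * p + y * q) = (1, y)"
    using mu_couple_eqI[OF assms(1,2), of 1 y] assms(2) by simp
  then have "(x, y) = mu_couple p q (x * p + y * q)" and "mu_irreducible p q (x * p + y * q)"
    using mu_irreducible_if_fst_one[OF assms(1,2)] \<open>x = 1\<close> by simp_all
  moreover have "x * p + y * q \<in> {1..max p q}"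
    using assms(2-4) mem_bezout_set_iff[OF assms(1)] by simp
  ultimately show "bezout_irreducible p q (x, y)"
    unfolding bezout_irreducible_def by blast
qed

lemma divisor_less_add_mult_iff:
  fixes p q y :: int
  assumes "0 < q" "0 < p mod q"
  shows "q < p + y * q \<longleftrightarrow> - (p div q) < y"
proof -
  have "p + y * q = (p div q + y) * q + p mod q"
    by (simp add: algebra_simps)
  moreover have "p mod q < q"
    using assms(1) by simp
  ultimately show ?thesis
    using assms by (smt (verit) mult_le_0_iff mult_less_cancel_right2)
qed

lemma irreducible_outside_euclid_step_image_iff:
  fixes p q x y :: int
  assumes "coprime p q" "1 < q" "q < p"
  shows "(x, y) \<in> bezout_set p q - euclid_step (p div q) ` bezout_set q (p mod q)
      \<and> bezout_irreducible p q (x, y)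
    \<longleftrightarrow> x = 1 \<and> - (p div q) < y \<and> y \<le> 0"
proof -
  have "(x, y) \<in> bezout_set p q - euclid_step (p div q) ` bezout_set q (p mod q)
      \<and> bezout_irreducible p q (x, y)
    \<longleftrightarrow> (x, y) \<in> bezout_set p q \<and> q < x * p + y * q \<and> x = 1"
  proof (cases "(x, y) \<in> bezout_set p q")
    case True
    then show ?thesis
      using euclid_step_image_iff_index_le[OF assms True]
        bezout_irreducible_above_iff[OF assms(1) _ assms(3) True] assms(2) by auto
  qed simp
  also have "\<dots> \<longleftrightarrow> x = 1 \<and> q < p + y * q \<and> p + y * q \<le> p"
    using mem_bezout_set_iff[OF assms(1)] assms(2,3) by auto
  also have "\<dots> \<longleftrightarrow> x = 1 \<and> - (p div q) < y \<and> y \<le> 0"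
    using divisor_less_add_mult_iff[of q p y] coprime_imp_mod_pos[OF assms(1,2)] assms(2)
    by (simp add: mult_le_0_iff)
  finally show ?thesis .
qed

theorem proposition3p9:
  fixes dj dk :: int
  assumes "coprime dj dk" and "1 < dj" and "dj < dk"
  shows "{c \<in> bezout_set dk dj -
              (\<lambda>(x', y'). (y', x' - y' * (dk div dj))) ` bezout_set dj (dk mod dj).
            bezout_irreducible dk dj c}
         = {(1, y) | y. - (dk div dj) < y \<and> y \<le> 0}"
proof -
  have "coprime dk dj"
    using assms(1) by (simp add: coprime_commute)
  then have "{c \<in> bezout_set dk dj - euclid_step (dk div dj) ` bezout_set dj (dk mod dj).
      bezout_irreducible dk dj c} = {(1, y) | y. - (dk div dj) < y \<and> y \<le> 0}"
    using irreducible_outside_euclid_step_image_iff[OF _ assms(2,3)] by auto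
  then show ?thesis
    unfolding euclid_step_def .
qed

end
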